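(* If $M$ is a perfect matching of an ST graph $G$, then $G$ is isomorphic to $\mathrm{Split}(\mathrm{Join}(G,M))$.
   Context: A digraph $G$ is a finite set $V(G)$ with $E(G)\subseteq V(G)\times V(G)$ (loops allowed). A source has no in-neighbors, a sink has no out-neighbors; $G$ is an ST graph if every vertex is a source or a sink. A matching $M$ is a set of arcs no two of which share an endpoint; $V(M)$ is the set of endpoints of its arcs; $M$ is perfect if $V(M)=V(G)$. For a matching $M$ of $G$, $\mathrm{Join}(G,M)$ is the digraph with a vertex $(v,v)$ for each $v\in V(G)\setminus V(M)$ and a vertex $(v,w)$ for each $v\to w\in M$, where $(v,w)\to(x,y)$ is an arc iff $v\to y\in E(G)$. For a digraph $D$, $\mathrm{Split}(D)$ has a vertex $\mathrm{out}(v)$ for each non-sink $v$ of $D$ and a vertex $\mathrm{in}(w)$ for each non-source $w$ of $D$ (all distinct), with $\mathrm{out}(v)\to\mathrm{in}(w)$ an arc iff $v\to w\in E(D)$, and no other arcs. Isomorphism means a bijection of vertex sets mapping arcs exactly onto arcs. *)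

theory Defs
  imports Main
begin

definition digraph :: "'a set \<Rightarrow> ('a \<times> 'a) set \<Rightarrow> bool" where
  "digraph V E \<longleftrightarrow> finite V \<and> E \<subseteq> V \<times> V"

definition is_source :: "'a set \<Rightarrow> ('a \<times> 'a) set \<Rightarrow> 'a \<Rightarrow> bool" where
  "is_source V E v \<longleftrightarrow> v \<in> V \<and> (\<forall>u. (u, v) \<notin> E)"

definition is_sink :: "'a set \<Rightarrow> ('a \<times> 'a) set \<Rightarrow> 'a \<Rightarrow> bool" where
  "is_sink V E v \<longleftrightarrow> v \<in> V \<and> (\<forall>w. (v, w) \<notin> E)"

definition ST_graph :: "'a set \<Rightarrow> ('a \<times> 'a) set \<Rightarrow> bool" where
  "ST_graph V E \<longleftrightarrow> (\<forall>v\<in>V. is_source V E v \<or> is_sink V E v)"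

definition matched_vertices :: "('a \<times> 'a) set \<Rightarrow> 'a set" where
  "matched_vertices M = fst ` M \<union> snd ` M"

definition matching :: "('a \<times> 'a) set \<Rightarrow> ('a \<times> 'a) set \<Rightarrow> bool" where
  "matching E M \<longleftrightarrow> M \<subseteq> E \<and>
     (\<forall>a\<in>M. \<forall>b\<in>M. a \<noteq> b \<longrightarrow> {fst a, snd a} \<inter> {fst b, snd b} = {})"

definition perfect_matching :: "'a set \<Rightarrow> ('a \<times> 'a) set \<Rightarrow> ('a \<times> 'a) set \<Rightarrow> bool" where
  "perfect_matching V E M \<longleftrightarrow> matching E M \<and> matched_vertices M = V"

definition join_V :: "'a set \<Rightarrow> ('a \<times> 'a) set \<Rightarrow> ('a \<times> 'a) set" where
  "join_V V M = {(v, v) | v. v \<in> V - matched_vertices M} \<union> M"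

definition join_E :: "'a set \<Rightarrow> ('a \<times> 'a) set \<Rightarrow> ('a \<times> 'a) set \<Rightarrow> (('a \<times> 'a) \<times> ('a \<times> 'a)) set" where
  "join_E V E M = {(p, q). p \<in> join_V V M \<and> q \<in> join_V V M \<and> (fst p, snd q) \<in> E}"

datatype 'b split_vertex = Out 'b | In 'b

definition split_V :: "'b set \<Rightarrow> ('b \<times> 'b) set \<Rightarrow> 'b split_vertex set" where
  "split_V V E = {Out v | v. v \<in> V \<and> \<not> is_sink V E v} \<union> {In w | w. w \<in> V \<and> \<not> is_source V E w}"

definition split_E :: "'b set \<Rightarrow> ('b \<times> 'b) set \<Rightarrow> ('b split_vertex \<times> 'b split_vertex) set" where
  "split_E V E = {(Out v, In w) | v w. (v, w) \<in> E}"

definition digraph_iso :: "'a set \<Rightarrow> ('a \<times> 'a) set \<Rightarrow> 'c set \<Rightarrow> ('c \<times> 'c) set \<Rightarrow> bool" where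
  "digraph_iso V1 E1 V2 E2 \<longleftrightarrow> (\<exists>f. bij_betw f V1 V2 \<and>
     (\<forall>x\<in>V1. \<forall>y\<in>V1. (x, y) \<in> E1 \<longleftrightarrow> (f x, f y) \<in> E2))"

end

theory Submission
  imports Defs
begin

text \<open>A perfect matching turns every vertex of G into exactly one end of an arc of M, so the
  vertices of Join(G,M) are the arcs of M.  Each such arc is a loop of Join(G,M), hence gives
  both an out- and an in-vertex of the split.  Sending out(v,w) to v and in(v,w) to w is then a
  bijection onto V; it maps arcs to arcs because an arc (v,w),(x,y) of Join(G,M) is an arc v\<rightarrow>y
  of G, and the ST property (tails are sources, heads are sinks) rules out all other
  combinations of out- and in-vertices.\<close>

lemma digraph_iso_sym:
  assumes "digraph_iso V1 E1 V2 E2"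
  shows "digraph_iso V2 E2 V1 E1"
proof -
  obtain f where f: "bij_betw f V1 V2"
    and arcs: "\<forall>x\<in>V1. \<forall>y\<in>V1. (x, y) \<in> E1 \<longleftrightarrow> (f x, f y) \<in> E2"
    using assms unfolding digraph_iso_def by blast
  let ?g = "inv_into V1 f"
  have "bij_betw ?g V2 V1" using f by (rule bij_betw_inv_into)
  moreover have "\<forall>x\<in>V2. \<forall>y\<in>V2. (x, y) \<in> E2 \<longleftrightarrow> (?g x, ?g y) \<in> E1"
    using arcs f by (simp add: bij_betw_def inv_into_into f_inv_into_f)
  ultimately show ?thesis unfolding digraph_iso_def by blast
qed

lemma ST_graph_arc_tail_source:
  assumes "digraph V E" "ST_graph V E" "(x, y) \<in> E"
  shows "(u, x) \<notin> E"
  using assms unfolding digraph_def ST_graph_def is_source_def is_sink_def by blast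

lemma ST_graph_arc_head_sink:
  assumes "digraph V E" "ST_graph V E" "(x, y) \<in> E"
  shows "(y, w) \<notin> E"
  using assms unfolding digraph_def ST_graph_def is_source_def is_sink_def by blast

lemma matching_tail_unique:
  assumes "matching E M" "(u, w) \<in> M" "(u, w') \<in> M"
  shows "w = w'"
  using assms unfolding matching_def by fastforce

lemma matching_head_unique:
  assumes "matching E M" "(v, w) \<in> M" "(v', w) \<in> M"
  shows "v = v'"
  using assms unfolding matching_def by fastforce

lemma join_V_perfect_matching:
  assumes "perfect_matching V E M"
  shows "join_V V M = M"
  using assms unfolding join_V_def perfect_matching_def by auto

lemma join_E_perfect_matching:
  assumes "perfect_matching V E M"
  shows "(p, q) \<in> join_E V E M \<longleftrightarrow> p \<in> M \<and> q \<in> M \<and> (fst p, snd q) \<in> E"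
  using join_V_perfect_matching[OF assms] unfolding join_E_def by auto

lemma split_V_join_perfect_matching:
  assumes "perfect_matching V E M"
  shows "split_V M (join_E V E M) = Out ` M \<union> In ` M"
proof -
  have "(p, p) \<in> join_E V E M" if "p \<in> M" for p
    using that assms join_E_perfect_matching[OF assms]
    unfolding perfect_matching_def matching_def by auto
  then show ?thesis unfolding split_V_def is_sink_def is_source_def by blast
qed

fun arc_end :: "('a \<times> 'a) split_vertex \<Rightarrow> 'a" where
  "arc_end (Out p) = fst p"
| "arc_end (In p) = snd p"

context
  fixes V :: "'a set" and E M :: "('a \<times> 'a) set"
  assumes digraph: "digraph V E" and ST: "ST_graph V E" and perfect: "perfect_matching V E M"
begin

private lemma M_arcs: "M \<subseteq> E"
  using perfect unfolding perfect_matching_def matching_def by simp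

private lemma matching_M: "matching E M"
  using perfect unfolding perfect_matching_def by simp

private lemma M_tail_not_head: "(u, w) \<in> M \<Longrightarrow> (v, u) \<notin> M"
  using M_arcs ST_graph_arc_tail_source[OF digraph ST, of u w v] by blast

lemma bij_betw_arc_end: "bij_betw arc_end (Out ` M \<union> In ` M) V"
proof (rule bij_betw_imageI)
  show "inj_on arc_end (Out ` M \<union> In ` M)"
  proof (rule inj_onI)
    fix a b assume "a \<in> Out ` M \<union> In ` M" "b \<in> Out ` M \<union> In ` M" "arc_end a = arc_end b"
    then show "a = b"
      by (auto dest: matching_tail_unique[OF matching_M] matching_head_unique[OF matching_M]
          M_tail_not_head)
  qed
  show "arc_end ` (Out ` M \<union> In ` M) = V"
    using perfect unfolding perfect_matching_def matched_vertices_def by (force simp: image_image)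
qed

private lemma M_head_sink: "p \<in> M \<Longrightarrow> (snd p, y) \<notin> E"
  using M_arcs ST_graph_arc_head_sink[OF digraph ST, of "fst p" "snd p" y] by auto

private lemma M_tail_source: "q \<in> M \<Longrightarrow> (x, fst q) \<notin> E"
  using M_arcs ST_graph_arc_tail_source[OF digraph ST, of "fst q" "snd q" x] by auto

lemma split_join_arc_iff:
  assumes "a \<in> Out ` M \<union> In ` M" "b \<in> Out ` M \<union> In ` M"
  shows "(a, b) \<in> split_E M (join_E V E M) \<longleftrightarrow> (arc_end a, arc_end b) \<in> E"
  using assms M_head_sink M_tail_source
  by (auto simp: split_E_def join_E_perfect_matching[OF perfect])

end

theorem lemma5:
  fixes V :: "'a set" and E M :: "('a \<times> 'a) set"
  assumes "digraph V E" and "ST_graph V E" and "perfect_matching V E M"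
  shows "digraph_iso V E
           (split_V (join_V V M) (join_E V E M)) (split_E (join_V V M) (join_E V E M))"
proof -
  have "digraph_iso (Out ` M \<union> In ` M) (split_E M (join_E V E M)) V E"
    unfolding digraph_iso_def
    using bij_betw_arc_end[OF assms] split_join_arc_iff[OF assms]
    by (intro exI[of _ arc_end]) simp
  then show ?thesis
    unfolding join_V_perfect_matching[OF assms(3)] split_V_join_perfect_matching[OF assms(3)]
    by (rule digraph_iso_sym)
qed

end
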